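(* Let $(f,I,U)$ be a safety verification problem that is robustly safe with robustness margin $\mu>0$, with $\overline{I}\cap\overline{U}=\emptyset$ and $\mathbb{R}^n\setminus U$ bounded, and let $V$ be a $\mu$-robust safety certificate of $(f,I,U)$. Define $\nu: R^{\mathbb{R}}_f(\partial\overline{V})\to\mathbb{R}$ by $\nu(x):=-t$, where $t$ is the unique $t\in\mathbb{R}$ with $\varphi_f(x,t)\in\partial\overline{V}$. Then there is an open neighborhood of $\partial\overline{V}$, contained in the domain of $\nu$, on which $\nu$ is continuous.
   Context: A safety verification problem is a triple $(f,I,U)$ with $f:\mathbb{R}^n\to\mathbb{R}^n$ smooth, $I,U\subseteq\mathbb{R}^n$. Convention: the flow $\varphi_f(x,t)$ of $\dot x=f(x)$ (the state reached at time $t\in\mathbb{R}$ from $x$; negative $t$ allowed) is defined for all $x$, $t$. For $X\subseteq\mathbb{R}^n$, $R^{\mathbb{R}}_f(X)=\{\varphi_f(x,t)\mid x\in X,\ t\in\mathbb{R}\}$. $\partial\overline{V}$ denotes the boundary of the closure of $V$. Under the hypotheses, for every $x\in R^{\mathbb{R}}_f(\partial\overline{V})$ there is exactly one $t\in\mathbb{R}$ with $\varphi_f(x,t)\in\partial\overline{V}$, so $\nu$ is well defined. For $\varepsilon\ge 0$, an $\varepsilon$-solution of $\dot x=f(x)$ is a differentiable function $x:\mathbb{R}^{\ge0}\to\mathbb{R}^n$ with $\|f(x(t))-\dot x(t)\|\le\varepsilon$ for all $t\ge0$. For $X\subseteq\mathbb{R}^n$, $T\subseteq\mathbb{R}^{\ge0}$: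 $R^{T}_{f,\varepsilon}(X)=\{x(t)\mid t\in T,\ x\text{ an }\varepsilon\text{-solution with }x(0)\in X\}$, $R_{f,\varepsilon}(X)=R^{\mathbb{R}^{\ge0}}_{f,\varepsilon}(X)$. Robustly safe with robustness margin $\mu>0$ means $R_{f,\mu}(I)\cap U=\emptyset$. A $\mu$-robust safety certificate is a set $V$ with $I\subseteq V$, $R_{f,\mu}(V)\subseteq V$, $V\cap U=\emptyset$. *)

theory Defs
  imports "HOL-Analysis.Analysis"
begin

text \<open>Smoothness (C-infinity): all iterated (Frechet) directional derivatives exist
  everywhere. D vs is the iterated derivative in the directions listed in vs.\<close>
definition smooth_fun :: "('a::real_normed_vector \<Rightarrow> 'b::real_normed_vector) \<Rightarrow> bool" where
  "smooth_fun f \<longleftrightarrow> (\<exists>D :: 'a list \<Rightarrow> 'a \<Rightarrow> 'b. D [] = f \<and>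
      (\<forall>vs x. (D vs has_derivative (\<lambda>v. D (v # vs) x)) (at x)))"

definition is_flow :: "('a::real_normed_vector \<Rightarrow> 'a) \<Rightarrow> ('a \<Rightarrow> real \<Rightarrow> 'a) \<Rightarrow> bool" where
  "is_flow f phi \<longleftrightarrow> (\<forall>x. phi x 0 = x) \<and>
      (\<forall>x t. ((\<lambda>s. phi x s) has_vector_derivative f (phi x t)) (at t))"

text \<open>R^R_f(X): states reachable forwards or backwards in time.\<close>
definition flow_reach :: "('a \<Rightarrow> real \<Rightarrow> 'a) \<Rightarrow> 'a set \<Rightarrow> 'a set" where
  "flow_reach phi X = {phi x t | x t. x \<in> X}"

definition eps_solution :: "('a::real_normed_vector \<Rightarrow> 'a) \<Rightarrow> real \<Rightarrow> (real \<Rightarrow> 'a) \<Rightarrow> bool" where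
  "eps_solution f eps x \<longleftrightarrow> (\<exists>x'. \<forall>t\<ge>0. (x has_vector_derivative x' t) (at t within {0..}) \<and>
      norm (f (x t) - x' t) \<le> eps)"

definition reach_eps :: "('a::real_normed_vector \<Rightarrow> 'a) \<Rightarrow> real \<Rightarrow> 'a set \<Rightarrow> 'a set" where
  "reach_eps f eps X = {x t | x t. t \<ge> 0 \<and> eps_solution f eps x \<and> x 0 \<in> X}"

definition robustly_safe :: "('a::real_normed_vector \<Rightarrow> 'a) \<Rightarrow> 'a set \<Rightarrow> 'a set \<Rightarrow> real \<Rightarrow> bool" where
  "robustly_safe f I U mu \<longleftrightarrow> mu > 0 \<and> reach_eps f mu I \<inter> U = {}"

definition robust_certificate :: "('a::real_normed_vector \<Rightarrow> 'a) \<Rightarrow> 'a set \<Rightarrow> 'a set \<Rightarrow> real \<Rightarrow> 'a set \<Rightarrow> bool" where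
  "robust_certificate f I U mu V \<longleftrightarrow> I \<subseteq> V \<and> reach_eps f mu V \<subseteq> V \<and> V \<inter> U = {}"

definition nu :: "('a::topological_space \<Rightarrow> real \<Rightarrow> 'a) \<Rightarrow> 'a set \<Rightarrow> 'a \<Rightarrow> real" where
  "nu phi V x = - (THE t. phi x t \<in> frontier (closure V))"

end

theory Submission
  imports Defs
begin

text \<open>
  Robust invariance makes the flow map the closure of \<open>V\<close> into the interior of \<open>V\<close> at every
  positive time: a point \<open>y \<in> V\<close> close to \<open>x\<close> can be steered onto the trajectory of \<open>x\<close> by a
  \<open>\<mu>\<close>-solution, and continuous dependence on initial values makes this uniform near \<open>x\<close>.
  Consequently every trajectory meeting \<open>\<partial>(cl V)\<close> lies outside \<open>cl V\<close> before the hitting time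
  and inside \<open>int (cl V)\<close> after it. So \<open>-\<nu>(x)\<close> is squeezed between any time at which the trajectory
  of \<open>x\<close> is outside \<open>cl V\<close> and any time at which it is in \<open>int (cl V)\<close>; these are open
  conditions on \<open>x\<close>, which gives both the openness of the domain of \<open>\<nu>\<close> and its continuity.
\<close>

definition lipschitz_on_compacts :: "('a::metric_space \<Rightarrow> 'b::metric_space) \<Rightarrow> bool" where
  "lipschitz_on_compacts g \<longleftrightarrow> (\<forall>K. compact K \<longrightarrow> (\<exists>L. L-lipschitz_on K g))"

definition ode_solution :: "('a::real_normed_vector \<Rightarrow> 'a) \<Rightarrow> (real \<Rightarrow> 'a) \<Rightarrow> bool" where
  "ode_solution g u \<longleftrightarrow> (\<forall>t. (u has_vector_derivative g (u t)) (at t))"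

lemma smooth_fun_imp_lipschitz_on_compacts:
  fixes f :: "'a::euclidean_space \<Rightarrow> 'b::real_normed_vector"
  assumes "smooth_fun f"
  shows "lipschitz_on_compacts f"
  unfolding lipschitz_on_compacts_def
proof (intro allI impI)
  fix K :: "'a set"
  assume "compact K"
  obtain D :: "'a list \<Rightarrow> 'a \<Rightarrow> 'b" where D0: "D [] = f"
    and DD: "\<And>vs x. (D vs has_derivative (\<lambda>v. D (v # vs) x)) (at x)"
    using assms unfolding smooth_fun_def by blast
  have f': "(f has_derivative (\<lambda>v. D [v] x)) (at x)" for x
    using DD[of "[]" x] D0 by simp
  define F where "F x = Blinfun (\<lambda>v. D [v] x)" for x
  have F: "blinfun_apply (F x) = (\<lambda>v. D [v] x)" for x
    unfolding F_def using f' has_derivative_bounded_linear bounded_linear_Blinfun_apply by blast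
  have "continuous (at x) (D vs)" for vs x
    using DD[of vs x] has_derivative_continuous by blast
  then have "continuous (at x) F" for x
    by (intro continuous_blinfun_componentwiseI1) (simp add: F)
  then have "continuous_on UNIV F"
    by (simp add: continuous_at_imp_continuous_on)
  obtain c R where R: "K \<subseteq> cball c R"
    using compact_imp_bounded[OF \<open>compact K\<close>] unfolding bounded_subset_cball by blast
  have "bounded (F ` cball c R)"
    by (intro compact_imp_bounded compact_continuous_image
        continuous_on_subset[OF \<open>continuous_on UNIV F\<close>]) auto
  then obtain B where "0 < B" and B: "\<And>x. x \<in> cball c R \<Longrightarrow> norm (F x) \<le> B"
    unfolding bounded_pos by blast
  have "norm (f x - f y) \<le> B * norm (x - y)" if "x \<in> cball c R" "y \<in> cball c R" for x y
  proof (rule differentiable_bound[OF convex_cball _ _ that])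
    show "(f has_derivative (\<lambda>v. D [v] z)) (at z within cball c R)" for z
      using f' has_derivative_at_withinI by blast
    show "onorm (\<lambda>v. D [v] z) \<le> B" if "z \<in> cball c R" for z
      using B[OF that] by (simp add: norm_blinfun.rep_eq F)
  qed
  then have "B-lipschitz_on K f"
    using R \<open>0 < B\<close> by (intro lipschitz_onI) (auto simp: dist_norm subset_iff)
  then show "\<exists>L. L-lipschitz_on K f" ..
qed

lemma lipschitz_on_compactsE:
  assumes "lipschitz_on_compacts g" "compact K"
  obtains L where "L-lipschitz_on K g"
  using assms unfolding lipschitz_on_compacts_def by blast

lemma lipschitz_on_compacts_uminus [simp]:
  "lipschitz_on_compacts (\<lambda>x. - g x) \<longleftrightarrow> lipschitz_on_compacts (g :: _ \<Rightarrow> 'b::real_normed_vector)"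
  by (simp add: lipschitz_on_compacts_def)

lemma ode_solution_continuous: "ode_solution g u \<Longrightarrow> continuous_on UNIV u"
  unfolding ode_solution_def
  by (meson continuous_at_imp_continuous_on has_vector_derivative_continuous)

lemma ode_solution_shift:
  assumes "ode_solution g u"
  shows "ode_solution g (\<lambda>t. u (s + t))"
  unfolding ode_solution_def
proof
  fix t
  have "((\<lambda>t. s + t) has_vector_derivative 1) (at t)"
    by (auto intro!: derivative_eq_intros simp flip: has_real_derivative_iff_has_vector_derivative)
  moreover have "(u has_vector_derivative g (u (s + t))) (at (s + t))"
    using assms by (simp add: ode_solution_def)
  ultimately show "((\<lambda>t. u (s + t)) has_vector_derivative g (u (s + t))) (at t)"
    using vector_diff_chain_at by (fastforce simp: o_def)
qed

lemma ode_solution_reverse: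
  assumes "ode_solution g u"
  shows "ode_solution (\<lambda>x. - g x) (\<lambda>t. u (- t))"
  unfolding ode_solution_def
proof
  fix t
  have "((\<lambda>t. - t) has_vector_derivative - 1) (at t)"
    by (auto intro!: derivative_eq_intros simp flip: has_real_derivative_iff_has_vector_derivative)
  moreover have "(u has_vector_derivative g (u (- t))) (at (- t))"
    using assms by (simp add: ode_solution_def)
  ultimately show "((\<lambda>t. u (- t)) has_vector_derivative - g (u (- t))) (at t)"
    using vector_diff_chain_at by (fastforce simp: o_def)
qed

lemma ode_solutions_norm_diff_le:
  fixes u w :: "real \<Rightarrow> 'a::real_inner"
  assumes u: "ode_solution g u" and w: "ode_solution g w" and "0 \<le> s" "0 \<le> L"
    and lip: "\<And>r. r \<in> {0..s} \<Longrightarrow> norm (g (u r) - g (w r)) \<le> L * norm (u r - w r)"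
  shows "norm (u s - w s) \<le> norm (u 0 - w 0) * exp (L * s)"
proof -
  define d where "d r = u r - w r" for r
  define d' where "d' r = g (u r) - g (w r)" for r
  have "(d has_vector_derivative d' r) (at r)" for r
    using u w unfolding d_def d'_def ode_solution_def by (intro has_vector_derivative_diff) auto
  then have d: "(d has_derivative (\<lambda>h. h *\<^sub>R d' r)) (at r)" for r
    by (simp add: has_vector_derivative_def)
  \<comment> \<open>\<open>\<parallel>d\<parallel>\<^sup>2\<close> grows at rate at most \<open>2L \<parallel>d\<parallel>\<^sup>2\<close>, so \<open>exp (-2 L r) \<parallel>d r\<parallel>\<^sup>2\<close> is nonincreasing\<close>
  define h where "h r = exp (- 2 * L * r) * (d r \<bullet> d r)" for r
  have h': "(h has_real_derivative
      exp (- 2 * L * r) * (2 * (d r \<bullet> d' r) - 2 * L * (d r \<bullet> d r))) (at r)" for r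
  proof -
    have "((\<lambda>r. d r \<bullet> d r) has_real_derivative 2 * (d r \<bullet> d' r)) (at r)"
      unfolding has_field_derivative_def
      by (rule has_derivative_eq_rhs[OF has_derivative_inner[OF d d]])
        (auto simp: inner_commute algebra_simps fun_eq_iff)
    then show ?thesis
      unfolding h_def by (auto intro!: derivative_eq_intros simp: algebra_simps)
  qed
  have "h s \<le> h 0"
  proof (rule DERIV_nonpos_imp_nonincreasing[OF \<open>0 \<le> s\<close>])
    fix r
    assume "0 \<le> r" "r \<le> s"
    have "d r \<bullet> d' r \<le> norm (d r) * norm (d' r)"
      by (rule norm_cauchy_schwarz)
    also have "\<dots> \<le> norm (d r) * (L * norm (d r))"
      using lip[of r] \<open>0 \<le> r\<close> \<open>r \<le> s\<close> unfolding d_def d'_def by (simp add: mult_left_mono)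
    finally have "d r \<bullet> d' r \<le> L * (d r \<bullet> d r)"
      by (simp add: power2_norm_eq_inner[symmetric] power2_eq_square algebra_simps)
    then show "\<exists>y. (h has_real_derivative y) (at r) \<and> y \<le> 0"
      using h' by (intro exI conjI) (auto intro!: mult_nonneg_nonpos)
  qed
  then have "(norm (d s))\<^sup>2 \<le> (norm (d 0) * exp (L * s))\<^sup>2"
    by (simp add: h_def power2_norm_eq_inner[symmetric] exp_minus field_simps power_mult_distrib
        flip: exp_of_nat_mult)
  then show ?thesis
    unfolding d_def by (rule power2_le_imp_le) simp
qed

lemma continuous_on_bootstrap:
  fixes d :: "real \<Rightarrow> real"
  assumes cont: "continuous_on {0..T} d" and "d 0 < c"
    and step: "\<And>s. s \<in> {0..T} \<Longrightarrow> (\<And>r. r \<in> {0..s} \<Longrightarrow> d r \<le> c) \<Longrightarrow> d s < c"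
    and "t \<in> {0..T}"
  shows "d t < c"
proof (rule ccontr)
  assume "\<not> d t < c"
  define S where "S = {0..T} \<inter> d -` {c..}"
  have "t \<in> S"
    using \<open>t \<in> {0..T}\<close> \<open>\<not> d t < c\<close> by (simp add: S_def)
  have "closed S"
    unfolding S_def by (rule continuous_closed_preimage[OF cont]) auto
  have "bdd_below S"
    by (auto simp: S_def intro: bdd_belowI[of _ 0])
  define s where "s = Inf S"
  have "s \<in> S"
    unfolding s_def using \<open>t \<in> S\<close> \<open>closed S\<close> \<open>bdd_below S\<close> closed_contains_Inf by blast
  then have "0 < s"
    using \<open>d 0 < c\<close> by (cases "s = 0") (auto simp: S_def)
  have "d r < c" if "r \<in> {0..<s}" for r
    using that cInf_lower[OF _ \<open>bdd_below S\<close>, of r] \<open>s \<in> S\<close> by (force simp: s_def S_def)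
  then have "{0..<s} \<subseteq> {0..T} \<inter> d -` {..c}"
    using \<open>s \<in> S\<close> by (force simp: S_def)
  moreover have "closed ({0..T} \<inter> d -` {..c})"
    by (rule continuous_closed_preimage[OF cont]) auto
  ultimately have "closure {0..<s} \<subseteq> {0..T} \<inter> d -` {..c}"
    by (rule closure_minimal)
  then have "{0..s} \<subseteq> d -` {..c}"
    using \<open>0 < s\<close> by (simp add: closure_atLeastLessThan)
  then have "d s < c"
    using \<open>s \<in> S\<close> by (intro step) (auto simp: S_def subset_iff)
  with \<open>s \<in> S\<close> show False
    by (simp add: S_def)
qed

lemma ode_solutions_close:
  fixes w :: "real \<Rightarrow> 'a::euclidean_space"
  assumes lip: "lipschitz_on_compacts g" and w: "ode_solution g w" and "0 \<le> T" "0 < e"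
  obtains \<delta> where "0 < \<delta>"
    "\<And>u t. ode_solution g u \<Longrightarrow> norm (u 0 - w 0) < \<delta> \<Longrightarrow> t \<in> {0..T} \<Longrightarrow> norm (u t - w t) < e"
proof -
  have "bounded (w ` {0..T})"
    by (intro compact_imp_bounded compact_continuous_image
        continuous_on_subset[OF ode_solution_continuous[OF w]]) auto
  then obtain R where R: "\<And>t. t \<in> {0..T} \<Longrightarrow> norm (w t) \<le> R"
    unfolding bounded_iff by blast
  obtain L where L: "L-lipschitz_on (cball 0 (R + 1)) g"
    using lipschitz_on_compactsE[OF lip compact_cball] .
  define \<delta> where "\<delta> = min 1 e / exp (L * T)"
  have "0 < \<delta>"
    using \<open>0 < e\<close> by (simp add: \<delta>_def)
  moreover
  have "norm (u t - w t) < e"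
    if u: "ode_solution g u" and "norm (u 0 - w 0) < \<delta>" and "t \<in> {0..T}" for u t
  proof -
    \<comment> \<open>as long as \<open>u\<close> stays within distance 1 of \<open>w\<close>, both lie in the ball where \<open>g\<close> is \<open>L\<close>-Lipschitz\<close>
    have close: "norm (u s - w s) < min 1 e"
      if "s \<in> {0..T}" and near: "\<And>r. r \<in> {0..s} \<Longrightarrow> norm (u r - w r) \<le> 1" for s
    proof -
      have "norm (g (u r) - g (w r)) \<le> L * norm (u r - w r)" if "r \<in> {0..s}" for r
      proof (rule lipschitz_on_normD[OF L])
        have "norm (w r) \<le> R"
          using R \<open>s \<in> {0..T}\<close> that by auto
        then show "w r \<in> cball 0 (R + 1)" "u r \<in> cball 0 (R + 1)"
          using near[OF that] norm_triangle_sub[of "u r" "w r"] by auto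
      qed
      then have "norm (u s - w s) \<le> norm (u 0 - w 0) * exp (L * s)"
        using \<open>s \<in> {0..T}\<close> lipschitz_on_nonneg[OF L]
        by (intro ode_solutions_norm_diff_le[OF u w]) auto
      also have "\<dots> \<le> norm (u 0 - w 0) * exp (L * T)"
        using \<open>s \<in> {0..T}\<close> lipschitz_on_nonneg[OF L] by (auto intro!: mult_left_mono)
      also have "\<dots> < \<delta> * exp (L * T)"
        using \<open>norm (u 0 - w 0) < \<delta>\<close> by simp
      finally show ?thesis
        by (simp add: \<delta>_def)
    qed
    have "continuous_on {0..T} u" "continuous_on {0..T} w"
      using ode_solution_continuous[OF u] ode_solution_continuous[OF w] continuous_on_subset by blast+
    have "\<delta> \<le> 1"
      using lipschitz_on_nonneg[OF L] \<open>0 \<le> T\<close> by (auto simp: \<delta>_def divide_le_eq_1 min_le_iff_disj)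
    have "norm (u r - w r) < 1" if "r \<in> {0..T}" for r
    proof (rule continuous_on_bootstrap[OF _ _ _ that])
      show "continuous_on {0..T} (\<lambda>r. norm (u r - w r))"
        by (intro continuous_intros) fact+
      show "norm (u 0 - w 0) < 1"
        using \<open>norm (u 0 - w 0) < \<delta>\<close> \<open>\<delta> \<le> 1\<close> by simp
      show "norm (u s - w s) < 1"
        if "s \<in> {0..T}" "\<And>r. r \<in> {0..s} \<Longrightarrow> norm (u r - w r) \<le> 1" for s
        using close[OF that] by simp
    qed
    then have "norm (u t - w t) < min 1 e"
      using \<open>t \<in> {0..T}\<close> by (intro close) (auto simp: less_imp_le)
    then show ?thesis
      by simp
  qed
  ultimately show ?thesis
    using that by blast
qed

lemma ode_solution_unique_forward:
  fixes u w :: "real \<Rightarrow> 'a::euclidean_space"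
  assumes lip: "lipschitz_on_compacts g" and u: "ode_solution g u" and w: "ode_solution g w"
    and "u 0 = w 0" and "0 \<le> t"
  shows "u t = w t"
proof -
  have "continuous_on {0..t} u" "continuous_on {0..t} w"
    using ode_solution_continuous[OF u] ode_solution_continuous[OF w] continuous_on_subset by blast+
  then have "compact (u ` {0..t} \<union> w ` {0..t})"
    by (intro compact_Un compact_continuous_image) auto
  then obtain L where L: "L-lipschitz_on (u ` {0..t} \<union> w ` {0..t}) g"
    by (rule lipschitz_on_compactsE[OF lip])
  have "norm (u t - w t) \<le> norm (u 0 - w 0) * exp (L * t)"
  proof (rule ode_solutions_norm_diff_le[OF u w \<open>0 \<le> t\<close> lipschitz_on_nonneg[OF L]])
    show "norm (g (u r) - g (w r)) \<le> L * norm (u r - w r)" if "r \<in> {0..t}" for r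
      using that by (intro lipschitz_on_normD[OF L]) auto
  qed
  then show ?thesis
    using \<open>u 0 = w 0\<close> by simp
qed

lemma ode_solution_unique:
  fixes u w :: "real \<Rightarrow> 'a::euclidean_space"
  assumes lip: "lipschitz_on_compacts g" and u: "ode_solution g u" and w: "ode_solution g w"
    and "u 0 = w 0"
  shows "u t = w t"
proof (cases "0 \<le> t")
  case True
  then show ?thesis
    by (rule ode_solution_unique_forward[OF lip u w \<open>u 0 = w 0\<close>])
next
  case False
  have "lipschitz_on_compacts (\<lambda>x. - g x)"
    using lip by simp
  then have "(\<lambda>t. u (- t)) (- t) = (\<lambda>t. w (- t)) (- t)"
    by (rule ode_solution_unique_forward[OF _ ode_solution_reverse[OF u] ode_solution_reverse[OF w]])
      (use False \<open>u 0 = w 0\<close> in auto)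
  then show ?thesis
    by simp
qed

lemma continuous_ode_solution_initial_value:
  fixes sol :: "'a::euclidean_space \<Rightarrow> real \<Rightarrow> 'a"
  assumes lip: "lipschitz_on_compacts g" and sol: "\<And>x. ode_solution g (sol x)"
    and init: "\<And>x. sol x 0 = x" and "0 \<le> t"
  shows "continuous (at x0) (\<lambda>x. sol x t)"
  unfolding continuous_at_eps_delta
proof (intro allI impI)
  fix e :: real
  assume "0 < e"
  obtain \<delta> where "0 < \<delta>" and \<delta>: "\<And>u s. ode_solution g u \<Longrightarrow> norm (u 0 - sol x0 0) < \<delta> \<Longrightarrow>
      s \<in> {0..t} \<Longrightarrow> norm (u s - sol x0 s) < e"
    using ode_solutions_close[OF lip sol \<open>0 \<le> t\<close> \<open>0 < e\<close>] by blast
  have "dist (sol x t) (sol x0 t) < e" if "dist x x0 < \<delta>" for x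
    using \<delta>[OF sol, of x t] that \<open>0 \<le> t\<close> by (simp add: init dist_norm)
  with \<open>0 < \<delta>\<close> show "\<exists>\<delta>>0. \<forall>x. dist x x0 < \<delta> \<longrightarrow> dist (sol x t) (sol x0 t) < e"
    by blast
qed

definition cutoff :: "real \<Rightarrow> real \<Rightarrow> real" where
  "cutoff T s = (if s \<le> T then (1 - s / T)\<^sup>2 else 0)"

definition cutoff_deriv :: "real \<Rightarrow> real \<Rightarrow> real" where
  "cutoff_deriv T s = (if s \<le> T then - 2 * (1 - s / T) / T else 0)"

lemma cutoff_has_real_derivative:
  assumes "0 < T"
  shows "(cutoff T has_real_derivative cutoff_deriv T s) (at s)"
proof -
  have "((\<lambda>s. if s \<in> {..T} then (1 - s / T)\<^sup>2 else 0) has_vector_derivative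
      (if s \<in> {..T} then - 2 * (1 - s / T) / T else 0)) (at s within UNIV)"
  proof (rule has_vector_derivative_If_within_closures[where T = "{T<..}"])
    have "((\<lambda>s. (1 - s / T)\<^sup>2) has_real_derivative - 2 * (1 - s / T) / T) (at s)" for s
      using assms by (auto intro!: derivative_eq_intros simp: divide_simps power2_eq_square power4_eq_xxxx)
    then show "((\<lambda>s. (1 - s / T)\<^sup>2) has_vector_derivative - 2 * (1 - s / T) / T)
        (at s within {..T} \<union> closure {..T} \<inter> closure {T<..})"
      by (simp add: has_field_derivative_at_within flip: has_real_derivative_iff_has_vector_derivative)
  qed (use assms in auto)
  then show ?thesis
    by (simp add: cutoff_def[abs_def] cutoff_deriv_def has_real_derivative_iff_has_vector_derivative)
qed

lemma abs_cutoff_le_1: "0 < T \<Longrightarrow> 0 \<le> s \<Longrightarrow> \<bar>cutoff T s\<bar> \<le> 1"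
  by (auto simp: cutoff_def power_le_one_iff field_simps)

lemma abs_cutoff_deriv_le: "0 < T \<Longrightarrow> 0 \<le> s \<Longrightarrow> \<bar>cutoff_deriv T s\<bar> \<le> 2 / T"
  by (auto simp: cutoff_deriv_def abs_mult field_simps)

text \<open>The \<open>\<mu>\<close>-solution follows \<open>u\<close> shifted by \<open>y - u 0\<close>, the shift being switched off by
  a \<open>C\<^sup>1\<close> cutoff that vanishes from time \<open>T\<close> on; its defect is at most \<open>(L + 2 / T) \<parallel>y - u 0\<parallel>\<close>.\<close>

lemma eps_solution_steering:
  fixes u :: "real \<Rightarrow> 'a::real_normed_vector"
  assumes u: "ode_solution g u" and "0 < T" and L: "L-lipschitz_on K g"
    and K: "\<And>s. s \<in> {0..T} \<Longrightarrow> cball (u s) (norm (y - u 0)) \<subseteq> K"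
    and small: "(L + 2 / T) * norm (y - u 0) \<le> mu"
  shows "\<exists>z. eps_solution g mu z \<and> z 0 = y \<and> z T = u T"
proof -
  define v where "v = y - u 0"
  define z where "z s = u s + cutoff T s *\<^sub>R v" for s
  define z' where "z' s = g (u s) + cutoff_deriv T s *\<^sub>R v" for s
  have "0 \<le> L"
    using lipschitz_on_nonneg[OF L] .
  have z': "(z has_vector_derivative z' s) (at s)" for s
    using u \<open>0 < T\<close> unfolding z_def[abs_def] z'_def ode_solution_def
    by (auto intro!: derivative_eq_intros cutoff_has_real_derivative)
  have "norm (g (z s) - z' s) \<le> mu" if "0 \<le> s" for s
  proof (cases "s \<le> T")
    case True
    have c: "\<bar>cutoff T s\<bar> \<le> 1" "\<bar>cutoff_deriv T s\<bar> \<le> 2 / T"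
      using \<open>0 < T\<close> \<open>0 \<le> s\<close> by (simp_all add: abs_cutoff_le_1 abs_cutoff_deriv_le)
    have "dist (z s) (u s) \<le> norm v"
      using c(1) by (simp add: z_def dist_norm mult_left_le_one_le)
    then have "z s \<in> K" "u s \<in> K"
      using K[of s] True \<open>0 \<le> s\<close> by (auto simp: v_def dist_commute)
    have "norm (g (z s) - z' s) \<le> norm (g (z s) - g (u s)) + \<bar>cutoff_deriv T s\<bar> * norm v"
      using norm_triangle_ineq4[of "g (z s) - g (u s)" "cutoff_deriv T s *\<^sub>R v"]
      by (simp add: z'_def algebra_simps)
    also have "\<dots> \<le> L * (\<bar>cutoff T s\<bar> * norm v) + 2 / T * norm v"
      using lipschitz_on_normD[OF L \<open>z s \<in> K\<close> \<open>u s \<in> K\<close>] mult_right_mono[OF c(2) norm_ge_zero]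
      by (intro add_mono) (simp_all add: z_def)
    also have "\<dots> \<le> (L + 2 / T) * norm v"
      using c(1) \<open>0 \<le> L\<close> by (simp add: distrib_right mult_left_le_one_le mult_left_mono)
    finally show ?thesis
      using small by (simp add: v_def)
  next
    case False
    have "0 \<le> (L + 2 / T) * norm v"
      using \<open>0 \<le> L\<close> \<open>0 < T\<close> by simp
    with False show ?thesis
      using small by (simp add: z_def z'_def cutoff_def cutoff_deriv_def v_def)
  qed
  then have "eps_solution g mu z"
    unfolding eps_solution_def using z' has_vector_derivative_at_within by blast
  moreover have "z 0 = y" "z T = u T"
    using \<open>0 < T\<close> by (simp_all add: z_def cutoff_def v_def)
  ultimately show ?thesis
    by blast
qed

locale smooth_flow =
  fixes f :: "'a::euclidean_space \<Rightarrow> 'a" and phi :: "'a \<Rightarrow> real \<Rightarrow> 'a"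
  assumes smooth: "smooth_fun f" and flow: "is_flow f phi"
begin

lemma lipschitz_on_compacts: "lipschitz_on_compacts f"
  using smooth_fun_imp_lipschitz_on_compacts[OF smooth] .

lemma flow_zero [simp]: "phi x 0 = x"
  using flow unfolding is_flow_def by blast

lemma ode_solution_flow: "ode_solution f (phi x)"
  using flow unfolding is_flow_def ode_solution_def by blast

lemma flow_add: "phi (phi x s) t = phi x (s + t)"
proof -
  have "phi (phi x s) t = (\<lambda>t. phi x (s + t)) t"
    by (rule ode_solution_unique[OF lipschitz_on_compacts ode_solution_flow
          ode_solution_shift[OF ode_solution_flow]]) simp
  then show ?thesis
    by simp
qed

lemma continuous_flow: "continuous (at x0) (\<lambda>x. phi x t)"
proof (cases "0 \<le> t")
  case True
  then show ?thesis
    by (rule continuous_ode_solution_initial_value[OF lipschitz_on_compacts ode_solution_flow flow_zero])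
next
  case False
  have "lipschitz_on_compacts (\<lambda>x. - f x)"
    using lipschitz_on_compacts by simp
  then have "continuous (at x0) (\<lambda>x. (\<lambda>r. phi x (- r)) (- t))"
    by (rule continuous_ode_solution_initial_value[OF _ ode_solution_reverse[OF ode_solution_flow]])
      (use False in auto)
  then show ?thesis
    by simp
qed

lemma continuous_on_flow: "continuous_on S (\<lambda>x. phi x t)"
  by (simp add: continuous_at_imp_continuous_on continuous_flow)

lemma continuous_on_flow_time: "continuous_on S (phi x)"
  using ode_solution_continuous[OF ode_solution_flow] continuous_on_subset by blast

lemma subset_flow_reach: "X \<subseteq> flow_reach phi X"
  unfolding flow_reach_def by (metis (mono_tags, lifting) flow_zero mem_Collect_eq subsetI)

end

locale robustly_invariant = smooth_flow f phi for f :: "'a::euclidean_space \<Rightarrow> 'a" and phi +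
  fixes V :: "'a set" and mu :: real
  assumes mu_pos: "0 < mu" and reach_eps_subset: "reach_eps f mu V \<subseteq> V"
begin

lemma flow_from_near_certificate:
  assumes "0 < T"
  obtains \<delta> where "0 < \<delta>"
    "\<And>x y. dist x x0 < \<delta> \<Longrightarrow> dist y x < \<delta> \<Longrightarrow> y \<in> V \<Longrightarrow> phi x T \<in> V"
proof -
  have "bounded (phi x0 ` {0..T})"
    by (intro compact_imp_bounded compact_continuous_image continuous_on_flow_time) auto
  then obtain R where R: "\<And>s. s \<in> {0..T} \<Longrightarrow> norm (phi x0 s) \<le> R"
    unfolding bounded_iff by blast
  obtain L where L: "L-lipschitz_on (cball 0 (R + 2)) f"
    by (rule lipschitz_on_compactsE[OF lipschitz_on_compacts compact_cball])
  obtain \<delta>\<^sub>1 where "0 < \<delta>\<^sub>1" and \<delta>\<^sub>1: "\<And>u s. ode_solution f u \<Longrightarrow> norm (u 0 - phi x0 0) < \<delta>\<^sub>1 \<Longrightarrow>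
      s \<in> {0..T} \<Longrightarrow> norm (u s - phi x0 s) < 1"
    using ode_solutions_close[OF lipschitz_on_compacts ode_solution_flow _ zero_less_one] \<open>0 < T\<close>
    by (metis less_imp_le)
  have "0 < L + 2 / T"
    using lipschitz_on_nonneg[OF L] \<open>0 < T\<close> by (simp add: add_nonneg_pos)
  define \<delta> where "\<delta> = min \<delta>\<^sub>1 (min 1 (mu / (L + 2 / T)))"
  have "0 < \<delta>"
    using \<open>0 < \<delta>\<^sub>1\<close> \<open>0 < L + 2 / T\<close> mu_pos by (simp add: \<delta>_def)
  moreover have "phi x T \<in> V" if "dist x x0 < \<delta>" "dist y x < \<delta>" "y \<in> V" for x y
  proof -
    have "norm (y - x) < 1" "norm (y - x) < mu / (L + 2 / T)"
      using \<open>dist y x < \<delta>\<close> by (auto simp: \<delta>_def dist_norm)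
    have "cball (phi x s) (norm (y - phi x 0)) \<subseteq> cball 0 (R + 2)" if "s \<in> {0..T}" for s
    proof -
      have "norm (phi x s - phi x0 s) < 1"
        using \<delta>\<^sub>1[OF ode_solution_flow _ that] \<open>dist x x0 < \<delta>\<close> by (simp add: \<delta>_def dist_norm)
      then have "norm (phi x s) < R + 1"
        using R[OF that] norm_triangle_sub[of "phi x s" "phi x0 s"] by simp
      show ?thesis
      proof
        fix z
        assume "z \<in> cball (phi x s) (norm (y - phi x 0))"
        then have "norm (z - phi x s) \<le> norm (y - x)"
          by (simp add: dist_norm norm_minus_commute)
        then show "z \<in> cball 0 (R + 2)"
          using norm_triangle_sub[of z "phi x s"] \<open>norm (phi x s) < R + 1\<close> \<open>norm (y - x) < 1\<close>
          by simp
      qed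
    qed
    moreover have "(L + 2 / T) * norm (y - phi x 0) \<le> mu"
      using \<open>norm (y - x) < mu / (L + 2 / T)\<close> \<open>0 < L + 2 / T\<close> by (simp add: field_simps)
    ultimately obtain z where "eps_solution f mu z" "z 0 = y" "z T = phi x T"
      using eps_solution_steering[OF ode_solution_flow \<open>0 < T\<close> L] by blast
    then have "phi x T \<in> reach_eps f mu V"
      unfolding reach_eps_def using \<open>y \<in> V\<close> \<open>0 < T\<close>
      by (intro CollectI exI[of _ z] exI[of _ T]) auto
    then show ?thesis
      using reach_eps_subset by blast
  qed
  ultimately show ?thesis
    using that by blast
qed

lemma flow_closure_into_interior:
  assumes "x0 \<in> closure V" and "0 < T"
  shows "phi x0 T \<in> interior V"
proof -
  obtain \<delta> where "0 < \<delta>"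
    and \<delta>: "\<And>x y. dist x x0 < \<delta> \<Longrightarrow> dist y x < \<delta> \<Longrightarrow> y \<in> V \<Longrightarrow> phi x T \<in> V"
    using flow_from_near_certificate[OF \<open>0 < T\<close>] by blast
  obtain y where "y \<in> V" "dist y x0 < \<delta> / 2"
    using \<open>x0 \<in> closure V\<close> \<open>0 < \<delta>\<close> unfolding closure_approachable by (meson half_gt_zero)
  define N where "N = (\<lambda>z. phi z (- T)) -` ball x0 (\<delta> / 2)"
  have "open N"
    unfolding N_def by (intro open_vimage open_ball continuous_on_flow)
  moreover have "phi x0 T \<in> N"
    using \<open>0 < \<delta>\<close> by (simp add: N_def flow_add)
  moreover have "N \<subseteq> V"
  proof
    fix z
    assume "z \<in> N"
    then have "dist (phi z (- T)) x0 < \<delta> / 2"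
      by (simp add: N_def dist_commute)
    moreover have "dist y (phi z (- T)) < \<delta>"
      using calculation \<open>dist y x0 < \<delta> / 2\<close> dist_triangle_half_r[of x0 y \<delta> "phi z (- T)"]
      by (simp add: dist_commute)
    ultimately have "phi (phi z (- T)) T \<in> V"
      using \<open>0 < \<delta>\<close> by (intro \<delta>[OF _ _ \<open>y \<in> V\<close>]) auto
    then show "z \<in> V"
      by (simp add: flow_add)
  qed
  ultimately show ?thesis
    by (meson interiorI)
qed

lemma flow_frontier_closure_iff:
  assumes "q \<in> frontier (closure V)"
  shows "phi q s \<in> closure V \<longleftrightarrow> 0 \<le> s"
proof
  assume "phi q s \<in> closure V"
  show "0 \<le> s"
  proof (rule ccontr)
    assume "\<not> 0 \<le> s"
    then have "phi (phi q s) (- s) \<in> interior V"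
      using \<open>phi q s \<in> closure V\<close> by (intro flow_closure_into_interior) auto
    then have "q \<in> interior V"
      by (simp add: flow_add)
    then have "q \<in> interior (closure V)"
      using interior_mono[OF closure_subset] by blast
    with assms show False
      by (simp add: frontier_def)
  qed
next
  assume "0 \<le> s"
  have "q \<in> closure V"
    using assms by (simp add: frontier_def)
  show "phi q s \<in> closure V"
  proof (cases "s = 0")
    case False
    then have "phi q s \<in> interior V"
      using \<open>q \<in> closure V\<close> \<open>0 \<le> s\<close> by (intro flow_closure_into_interior) auto
    then show ?thesis
      using interior_subset closure_subset by blast
  qed (simp add: \<open>q \<in> closure V\<close>)
qed

lemma flow_frontier_interior_iff:
  assumes "q \<in> frontier (closure V)"
  shows "phi q s \<in> interior (closure V) \<longleftrightarrow> 0 < s"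
proof
  assume s: "phi q s \<in> interior (closure V)"
  then have "0 \<le> s"
    using flow_frontier_closure_iff[OF assms] interior_subset by blast
  moreover have "s \<noteq> 0"
  proof
    assume "s = 0"
    with s assms show False
      by (simp add: frontier_def)
  qed
  ultimately show "0 < s"
    by simp
next
  assume "0 < s"
  have "q \<in> closure V"
    using assms by (simp add: frontier_def)
  then have "phi q s \<in> interior V"
    using \<open>0 < s\<close> by (rule flow_closure_into_interior)
  then show "phi q s \<in> interior (closure V)"
    using interior_mono[OF closure_subset] by blast
qed

lemma flow_frontier_iff:
  assumes "q \<in> frontier (closure V)"
  shows "phi q s \<in> frontier (closure V) \<longleftrightarrow> s = 0"
  by (simp add: frontier_def flow_frontier_closure_iff[OF assms] flow_frontier_interior_iff[OF assms])
    linarith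

lemma nu_flow:
  assumes "q \<in> frontier (closure V)"
  shows "nu phi V (phi q a) = a"
proof -
  have "(THE t. phi (phi q a) t \<in> frontier (closure V)) = - a"
  proof (rule the_equality)
    show "phi (phi q a) (- a) \<in> frontier (closure V)"
      using assms by (simp add: flow_add)
  next
    fix t
    assume "phi (phi q a) t \<in> frontier (closure V)"
    then have "a + t = 0"
      by (simp add: flow_add flow_frontier_iff[OF assms])
    then show "t = - a"
      by simp
  qed
  then show ?thesis
    by (simp add: nu_def)
qed

lemma flow_crossing_bounds_nu:
  assumes out: "phi x s \<notin> closure V" and inside: "phi x t \<in> interior (closure V)"
  shows "x \<in> flow_reach phi (frontier (closure V))" "s < - nu phi V x" "- nu phi V x < t"
proof -
  have "connected (phi x ` closed_segment s t)"
    by (intro connected_continuous_image continuous_on_flow_time connected_segment)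
  moreover have "phi x t \<in> phi x ` closed_segment s t \<inter> closure V"
    using inside interior_subset by blast
  moreover have "phi x s \<in> phi x ` closed_segment s t - closure V"
    using out by blast
  ultimately have "phi x ` closed_segment s t \<inter> frontier (closure V) \<noteq> {}"
    by (intro connected_Int_frontier) blast+
  then obtain r where q: "phi x r \<in> frontier (closure V)"
    by blast
  have x: "x = phi (phi x r) (- r)"
    by (simp add: flow_add)
  show "x \<in> flow_reach phi (frontier (closure V))"
    unfolding flow_reach_def using q x by blast
  have "nu phi V x = - r"
    by (subst x) (rule nu_flow[OF q])
  moreover have "s - r < 0"
    using out flow_frontier_closure_iff[OF q, of "s - r"] by (simp add: flow_add)
  moreover have "0 < t - r"
    using inside flow_frontier_interior_iff[OF q, of "t - r"] by (simp add: flow_add)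
  ultimately show "s < - nu phi V x" "- nu phi V x < t"
    by simp_all
qed

lemma flow_reach_crossing:
  assumes "x \<in> flow_reach phi (frontier (closure V))" and "0 < e"
  shows "phi x (- nu phi V x - e) \<notin> closure V" "phi x (- nu phi V x + e) \<in> interior (closure V)"
proof -
  obtain q a where q: "q \<in> frontier (closure V)" and x: "x = phi q a"
    using assms(1) unfolding flow_reach_def by blast
  show "phi x (- nu phi V x - e) \<notin> closure V" "phi x (- nu phi V x + e) \<in> interior (closure V)"
    using \<open>0 < e\<close> by (simp_all add: x nu_flow[OF q] flow_add
        flow_frontier_closure_iff[OF q] flow_frontier_interior_iff[OF q])
qed

lemma open_flow_crossing: "open {x. phi x s \<notin> closure V \<and> phi x t \<in> interior (closure V)}"
proof -
  have "{x. phi x s \<notin> closure V \<and> phi x t \<in> interior (closure V)} =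
      (\<lambda>x. phi x s) -` (- closure V) \<inter> (\<lambda>x. phi x t) -` interior (closure V)"
    by auto
  then show ?thesis
    by (simp add: open_Int open_vimage continuous_on_flow open_Compl)
qed

lemma eventually_nu_near:
  assumes "x0 \<in> flow_reach phi (frontier (closure V))" and "0 < e"
  shows "eventually (\<lambda>x. x \<in> flow_reach phi (frontier (closure V)) \<and>
    \<bar>nu phi V x - nu phi V x0\<bar> < e) (nhds x0)"
proof -
  define N where "N = {x. phi x (- nu phi V x0 - e) \<notin> closure V \<and>
    phi x (- nu phi V x0 + e) \<in> interior (closure V)}"
  have "open N" "x0 \<in> N"
    using open_flow_crossing flow_reach_crossing[OF assms] by (auto simp: N_def)
  moreover have "x \<in> flow_reach phi (frontier (closure V)) \<and> \<bar>nu phi V x - nu phi V x0\<bar> < e"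
    if "x \<in> N" for x
  proof -
    from that have "phi x (- nu phi V x0 - e) \<notin> closure V"
      "phi x (- nu phi V x0 + e) \<in> interior (closure V)"
      by (simp_all add: N_def)
    from flow_crossing_bounds_nu[OF this] show ?thesis
      by (simp add: abs_less_iff)
  qed
  ultimately show ?thesis
    unfolding eventually_nhds by blast
qed

lemma open_flow_reach_frontier: "open (flow_reach phi (frontier (closure V)))"
  unfolding open_dist
  using eventually_nu_near[OF _ zero_less_one] unfolding eventually_nhds_metric by blast

lemma continuous_on_nu: "continuous_on (flow_reach phi (frontier (closure V))) (nu phi V)"
proof -
  have "isCont (nu phi V) x0" if "x0 \<in> flow_reach phi (frontier (closure V))" for x0
    unfolding isCont_def tendsto_iff dist_real_def
  proof (intro allI impI)
    fix e :: real
    assume "0 < e"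
    show "eventually (\<lambda>x. \<bar>nu phi V x - nu phi V x0\<bar> < e) (at x0)"
      using filter_leD[OF at_within_le_nhds eventually_nu_near[OF that \<open>0 < e\<close>]]
      by (rule eventually_mono) simp
  qed
  then show ?thesis
    by (simp add: continuous_at_imp_continuous_on)
qed

end

theorem lemma3:
  fixes f :: "real^'n \<Rightarrow> real^'n" and phi :: "real^'n \<Rightarrow> real \<Rightarrow> real^'n"
    and I U V :: "(real^'n) set" and mu :: real
  assumes "smooth_fun f"
    and "is_flow f phi"
    and "robustly_safe f I U mu"
    and "closure I \<inter> closure U = {}"
    and "bounded (UNIV - U)"
    and "robust_certificate f I U mu V"
  shows "\<exists>W. open W \<and> frontier (closure V) \<subseteq> W \<and>
           W \<subseteq> flow_reach phi (frontier (closure V)) \<and> continuous_on W (nu phi V)"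
proof -
  \<comment> \<open>only \<open>\<mu> > 0\<close> and the robust invariance of \<open>V\<close> are needed\<close>
  interpret robustly_invariant f phi V mu
    using assms(1,2,3,6) unfolding robustly_safe_def robust_certificate_def
    by unfold_locales auto
  show ?thesis
    using open_flow_reach_frontier subset_flow_reach continuous_on_nu by blast
qed

end
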